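(* Consider factor graphs of LDPC codes with $N$ variable nodes and $M$ check nodes, all check nodes of degree $d_c$, variable node degree distribution (edge perspective) $\{\lambda_i\}$, and design rate $R=1-\frac{1/d_c}{\sum_j\lambda_j/j}=1-\frac{M}{N}$. A factor graph with this degree distribution having no cycles of variable nodes of degree two and three (i.e., in which the subgraph consisting of all variable nodes of degree two or three, all check nodes, and the edges between them contains no cycle) exists if and only if $$3\lambda_2+4\lambda_3\le\frac{6}{d_c}\,\frac{(1-R)-\frac1N}{1-R}.$$ Moreover, the right-hand side is strictly less than $\frac{6}{d_c}$.
   Context: $\lambda_i$ denotes the fraction of edges of the factor graph connected to variable nodes of degree $i$; the node-perspective fractions are $\Lambda_i=\frac{\lambda_i/i}{\sum_j\lambda_j/j}$, the fraction of variable nodes of degree $i$. The factor graph is the bipartite graph between variable nodes and check nodes of the parity-check matrix. *)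

theory Defs
  imports Complex_Main
begin

definition factor_graph :: "nat \<Rightarrow> nat \<Rightarrow> (nat \<times> nat) set \<Rightarrow> bool" where
  "factor_graph N M E \<longleftrightarrow> E \<subseteq> {..<N} \<times> {..<M}"

definition vdeg :: "(nat \<times> nat) set \<Rightarrow> nat \<Rightarrow> nat" where
  "vdeg E v = card {c. (v, c) \<in> E}"

definition cdeg :: "(nat \<times> nat) set \<Rightarrow> nat \<Rightarrow> nat" where
  "cdeg E c = card {v. (v, c) \<in> E}"

definition edge_dist :: "(nat \<times> nat) set \<Rightarrow> nat \<Rightarrow> real" where
  "edge_dist E i = real (card {e \<in> E. vdeg E (fst e) = i}) / real (card E)"

definition ldpc_graph ::
  "nat \<Rightarrow> nat \<Rightarrow> nat \<Rightarrow> (nat \<Rightarrow> real) \<Rightarrow> (nat \<times> nat) set \<Rightarrow> bool" where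
  "ldpc_graph N M dc lam E \<longleftrightarrow>
     factor_graph N M E \<and> E \<noteq> {} \<and>
     (\<forall>c<M. cdeg E c = dc) \<and>
     (\<forall>i. lam i = edge_dist E i)"

definition design_rate :: "nat \<Rightarrow> (nat \<Rightarrow> real) \<Rightarrow> real" where
  "design_rate dc lam =
     1 - (1 / real dc) / (\<Sum>j\<in>{j. 1 \<le> j \<and> lam j \<noteq> 0}. lam j / real j)"

fun adj23 :: "(nat \<times> nat) set \<Rightarrow> nat + nat \<Rightarrow> nat + nat \<Rightarrow> bool" where
  "adj23 E (Inl v) (Inr c) \<longleftrightarrow> (v, c) \<in> E \<and> vdeg E v \<in> {2, 3}"
| "adj23 E (Inr c) (Inl v) \<longleftrightarrow> (v, c) \<in> E \<and> vdeg E v \<in> {2, 3}"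
| "adj23 E _ _ \<longleftrightarrow> False"

definition has_cycle23 :: "(nat \<times> nat) set \<Rightarrow> bool" where
  "has_cycle23 E \<longleftrightarrow>
     (\<exists>vs. length vs \<ge> 3 \<and> distinct vs \<and>
        (\<forall>i < length vs. adj23 E (vs ! i) (vs ! ((i + 1) mod length vs))))"

end

theory Submission
  imports Defs
begin

text \<open>If the subgraph spanned by the n2 + n3 variables of degree two or three and the M checks
  has no cycle, it is a forest, so its 2 n2 + 3 n3 edges are fewer than its n2 + n3 + M vertices,
  i.e. n2 + 2 n3 + 1 \<le> M. Since \<lambda>i = i ni / (M dc) and 1 - R = M / N, this is exactly the
  stated inequality, whose right-hand side is 6/dc (M - 1)/M < 6/dc.
  Conversely, given the degrees of some realization, let L = 2 n2 + 3 n3 - M be the number of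
  edges of degree-2/3 variables that cannot get a check of their own; the bound says L < n2 + n3.
  So the first L + 1 of these variables can be strung into a path through L checks, all their
  other edges get private checks, and the remaining variables fill the free check sockets
  cyclically, which makes every check degree dc.\<close>

section \<open>Cycles in bipartite graphs\<close>

fun bip_adj :: "('a \<times> 'b) set \<Rightarrow> 'a + 'b \<Rightarrow> 'a + 'b \<Rightarrow> bool" where
  "bip_adj F (Inl a) (Inr c) \<longleftrightarrow> (a, c) \<in> F"
| "bip_adj F (Inr c) (Inl a) \<longleftrightarrow> (a, c) \<in> F"
| "bip_adj F _ _ \<longleftrightarrow> False"

lemma bip_adj_sym: "bip_adj F x y \<Longrightarrow> bip_adj F y x"
  by (cases x; cases y) auto

lemma bip_adj_irrefl: "\<not> bip_adj F x x"
  by (cases x) auto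

lemma bip_adjE:
  assumes "bip_adj F x y"
  obtains a c where "x = Inl a" "y = Inr c" "(a, c) \<in> F"
    | a c where "x = Inr c" "y = Inl a" "(a, c) \<in> F"
  using assms by (cases x; cases y) auto

lemma bip_adj_mono: "F' \<subseteq> F \<Longrightarrow> bip_adj F' x y \<Longrightarrow> bip_adj F x y"
  by (cases x; cases y) auto

definition is_cycle :: "('v \<Rightarrow> 'v \<Rightarrow> bool) \<Rightarrow> 'v list \<Rightarrow> bool" where
  "is_cycle G vs \<longleftrightarrow> length vs \<ge> 3 \<and> distinct vs \<and>
     (\<forall>i < length vs. G (vs ! i) (vs ! ((i + 1) mod length vs)))"

lemma is_cycle_bip_adj_mono:
  "F' \<subseteq> F \<Longrightarrow> is_cycle (bip_adj F') vs \<Longrightarrow> is_cycle (bip_adj F) vs"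
  unfolding is_cycle_def using bip_adj_mono by blast

lemma has_cycle23_iff:
  "has_cycle23 E \<longleftrightarrow> (\<exists>vs. is_cycle (bip_adj {e \<in> E. vdeg E (fst e) \<in> {2, 3}}) vs)"
proof -
  have "adj23 E = bip_adj {e \<in> E. vdeg E (fst e) \<in> {2, 3}}"
  proof (intro ext)
    fix x y show "adj23 E x y = bip_adj {e \<in> E. vdeg E (fst e) \<in> {2, 3}} x y"
      by (cases x; cases y) auto
  qed
  then show ?thesis unfolding has_cycle23_def is_cycle_def by simp
qed

lemma cycle_from_path:
  fixes G :: "'v \<Rightarrow> 'v \<Rightarrow> bool"
  assumes "finite W"
    and sym: "\<And>x y. G x y \<Longrightarrow> G y x" and irrefl: "\<And>x. \<not> G x x"
    and branching: "\<And>x. x \<in> W \<Longrightarrow> \<exists>y z. y \<noteq> z \<and> G x y \<and> G x z"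
    and closed: "\<And>x y. G x y \<Longrightarrow> y \<in> W"
    and "distinct xs" "length xs \<ge> 2" "set xs \<subseteq> W"
    and path: "\<And>i. i + 1 < length xs \<Longrightarrow> G (xs ! i) (xs ! (i + 1))"
  shows "\<exists>vs. is_cycle G vs"
  using assms(6-)
proof (induction "card W - length xs" arbitrary: xs rule: less_induct)
  case (less xs)
  have "xs ! 0 \<in> set xs" using less.prems(2) by (cases xs) auto
  then have "xs ! 0 \<in> W" using less.prems(3) by blast
  then obtain y where y: "G (xs ! 0) y" "y \<noteq> xs ! 1"
    using branching by metis
  show ?case
  proof (cases "y \<in> set xs")
    case False
    have "length (y # xs) \<le> card W"
      using less.prems \<open>finite W\<close> closed[OF y(1)] False
      by (metis card_mono distinct.simps(2) distinct_card insert_subset list.simps(15))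
    moreover have "\<And>i. i + 1 < length (y # xs) \<Longrightarrow> G ((y # xs) ! i) ((y # xs) ! (i + 1))"
      using sym[OF y(1)] less.prems(4) by (case_tac i) auto
    ultimately show ?thesis
      using less.hyps[of "y # xs"] less.prems False closed[OF y(1)] by simp
  next
    case True
    then obtain j where j: "j < length xs" "xs ! j = y" by (metis in_set_conv_nth)
    have "j \<noteq> 0" "j \<noteq> 1" using j y irrefl by (metis, metis One_nat_def)
    have "is_cycle G (take (Suc j) xs)"
      unfolding is_cycle_def
    proof (intro conjI allI impI)
      fix i assume "i < length (take (Suc j) xs)"
      then show "G (take (Suc j) xs ! i) (take (Suc j) xs ! ((i + 1) mod length (take (Suc j) xs)))"
        using j sym[OF y(1)] less.prems(4)[of i] by (cases "i = j") auto
    qed (use j \<open>j \<noteq> 0\<close> \<open>j \<noteq> 1\<close> less.prems(1) in auto)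
    then show ?thesis by blast
  qed
qed

lemma cycle_if_branching:
  fixes G :: "'v \<Rightarrow> 'v \<Rightarrow> bool"
  assumes "finite W" "W \<noteq> {}"
    and sym: "\<And>x y. G x y \<Longrightarrow> G y x" and irrefl: "\<And>x. \<not> G x x"
    and branching: "\<And>x. x \<in> W \<Longrightarrow> \<exists>y z. y \<noteq> z \<and> G x y \<and> G x z"
    and closed: "\<And>x y. G x y \<Longrightarrow> y \<in> W"
  shows "\<exists>vs. is_cycle G vs"
proof -
  obtain x where x: "x \<in> W" using \<open>W \<noteq> {}\<close> by blast
  then obtain y where y: "G x y" using branching by blast
  have "x \<noteq> y" using y irrefl by blast
  then show ?thesis
    using cycle_from_path[OF assms(1) sym irrefl branching closed, where xs = "[x, y]"] x closed[OF y] y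
    by (auto simp: less_2_cases_iff)
qed

lemma card_edges_le_remove_vertex:
  fixes F :: "('a \<times> 'b) set"
  assumes "finite {y. bip_adj F x y}" "card {y. bip_adj F x y} \<le> 1"
  shows "card F \<le> card {e \<in> F. Inl (fst e) \<noteq> x \<and> Inr (snd e) \<noteq> x} + 1"
proof -
  define F' where "F' = {e \<in> F. Inl (fst e) \<noteq> x \<and> Inr (snd e) \<noteq> x}"
  define other :: "'a \<times> 'b \<Rightarrow> 'a + 'b"
    where "other e = (if Inl (fst e) = x then Inr (snd e) else Inl (fst e))" for e
  have "card (F - F') \<le> card {y. bip_adj F x y}"
  proof (rule card_inj_on_le)
    show "inj_on other (F - F')" by (auto simp: inj_on_def other_def F'_def)
    show "other ` (F - F') \<subseteq> {y. bip_adj F x y}" by (auto simp: other_def F'_def)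
  qed (fact assms(1))
  then show ?thesis
    using assms(2) card_Un_le[of F' "F - F'"] by (simp add: F'_def Un_Diff_cancel2 Un_absorb1)
qed

text \<open>Removing a vertex with at most one neighbour loses at most one edge; if there is no
  such vertex, every vertex has two neighbours and a cycle exists.\<close>

lemma card_edges_less_if_acyclic:
  fixes F :: "('a \<times> 'b) set"
  assumes "finite W" "W \<noteq> {}"
    and ends: "\<And>a c. (a, c) \<in> F \<Longrightarrow> Inl a \<in> W \<and> Inr c \<in> W"
    and acyclic: "\<nexists>vs. is_cycle (bip_adj F) vs"
  shows "card F < card W"
  using assms
proof (induction "card W" arbitrary: W F rule: less_induct)
  case less
  have closed: "\<And>x y. bip_adj F x y \<Longrightarrow> y \<in> W"
    using less.prems(3) by (case_tac x; case_tac y) auto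
  then have fin: "finite {y. bip_adj F x y}" for x
    using less.prems(1) by (auto intro: finite_subset)
  show ?case
  proof (cases "\<exists>x\<in>W. card {y. bip_adj F x y} \<le> 1")
    case True
    then obtain x where x: "x \<in> W" "card {y. bip_adj F x y} \<le> 1" by blast
    define F' where "F' = {e \<in> F. Inl (fst e) \<noteq> x \<and> Inr (snd e) \<noteq> x}"
    have card_F: "card F \<le> card F' + 1"
      unfolding F'_def using card_edges_le_remove_vertex[OF fin x(2)] .
    show ?thesis
    proof (cases "W - {x} = {}")
      case True
      then have "F = {}"
        using less.prems(3) by (metis Diff_eq_empty_iff equals0I sum.distinct(1) singleton_iff
            subset_iff surj_pair)
      then show ?thesis using less.prems(1,2) by (simp add: card_gt_0_iff)
    next
      case False
      have "card F' < card (W - {x})"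
      proof (rule less.hyps)
        show "card (W - {x}) < card W" using less.prems(1) x(1) by (rule card_Diff1_less)
        show "\<And>a c. (a, c) \<in> F' \<Longrightarrow> Inl a \<in> W - {x} \<and> Inr c \<in> W - {x}"
          using less.prems(3) by (auto simp: F'_def)
        show "\<nexists>vs. is_cycle (bip_adj F') vs"
          using less.prems(4) is_cycle_bip_adj_mono[of F' F] by (auto simp: F'_def)
      qed (use less.prems(1) False in auto)
      then show ?thesis using card_F x(1) less.prems(1) by (simp add: card_gt_0_iff)
    qed
  next
    case False
    have "\<exists>vs. is_cycle (bip_adj F) vs"
    proof (rule cycle_if_branching[OF less.prems(1,2) bip_adj_sym bip_adj_irrefl _ closed])
      fix x assume "x \<in> W"
      then show "\<exists>y z. y \<noteq> z \<and> bip_adj F x y \<and> bip_adj F x z"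
        using False fin card_le_Suc0_iff_eq by fastforce
    qed
    then show ?thesis using less.prems(4) by blast
  qed
qed

lemma is_cycle_rotate: "is_cycle G vs \<Longrightarrow> is_cycle G (rotate k vs)"
  unfolding is_cycle_def
proof (intro conjI allI impI; (elim conjE)?)
  fix i
  assume len: "3 \<le> length vs" and adj: "\<forall>i<length vs. G (vs ! i) (vs ! ((i + 1) mod length vs))"
    and i: "i < length (rotate k vs)"
  define n where "n = length vs"
  have "rotate k vs ! i = vs ! ((k + i) mod n)"
    using i by (simp add: nth_rotate n_def)
  moreover have "rotate k vs ! ((i + 1) mod n) = vs ! ((k + (i + 1) mod n) mod n)"
    unfolding n_def using len by (intro nth_rotate mod_less_divisor) linarith
  moreover have "(k + (i + 1) mod n) mod n = ((k + i) mod n + 1) mod n"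
    by (simp add: mod_add_right_eq mod_Suc_eq add.assoc)
  moreover have "(k + i) mod n < n"
    unfolding n_def using len by (intro mod_less_divisor) linarith
  ultimately show "G (rotate k vs ! i) (rotate k vs ! ((i + 1) mod length (rotate k vs)))"
    using adj[rule_format, of "(k + i) mod n"] by (simp add: n_def)
qed auto

lemma is_cycle_rotate_to:
  assumes "is_cycle G vs" "x \<in> set vs"
  obtains ws where "is_cycle G ws" "set ws = set vs" "ws ! 2 = x"
proof -
  obtain i where i: "i < length vs" "vs ! i = x"
    using assms(2) by (metis in_set_conv_nth)
  have "length vs \<ge> 3"
    using assms(1) unfolding is_cycle_def by simp
  then have "i + length vs - 2 + 2 = i + length vs"
    by linarith
  then have "(i + length vs - 2 + 2) mod length vs = i"
    using i by simp
  then have "rotate (i + length vs - 2) vs ! 2 = x"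
    using i \<open>length vs \<ge> 3\<close> by (simp add: nth_rotate)
  then show thesis
    using that[OF is_cycle_rotate[OF assms(1)] set_rotate] by blast
qed

lemma is_cycle_window:
  assumes "is_cycle G ws"
  defines "n \<equiv> length ws"
  shows "G (ws ! 0) (ws ! 1)" "G (ws ! 1) (ws ! 2)" "G (ws ! 2) (ws ! (3 mod n))"
    "G (ws ! (3 mod n)) (ws ! (4 mod n))"
    and "ws ! 0 \<noteq> ws ! 2" "ws ! (4 mod n) \<noteq> ws ! 2" "ws ! 1 \<noteq> ws ! (3 mod n)"
    and "ws ! 0 \<in> set ws" "ws ! (4 mod n) \<in> set ws"
proof -
  have n: "n \<ge> 3" and adj: "\<And>j. j < n \<Longrightarrow> G (ws ! j) (ws ! ((j + 1) mod n))"
    using assms unfolding is_cycle_def by auto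
  have dist: "ws ! j \<noteq> ws ! k" if "j < n" "k < n" "j \<noteq> k" for j k
    using assms nth_eq_iff_index_eq[of ws j k] that unfolding is_cycle_def by auto
  have mod: "3 mod n < n" "4 mod n < n" "3 mod n \<noteq> 1" "4 mod n \<noteq> 2" "0 < length ws"
    using n unfolding n_def by (auto simp: mod_if)
  show "G (ws ! 0) (ws ! 1)" "G (ws ! 1) (ws ! 2)" "G (ws ! 2) (ws ! (3 mod n))"
    using adj[of 0] adj[of 1] adj[of 2] n by (auto simp: numeral_2_eq_2 numeral_3_eq_3)
  show "G (ws ! (3 mod n)) (ws ! (4 mod n))"
    using adj[of "3 mod n"] mod n by (auto simp: mod_Suc_eq)
  show "ws ! 0 \<noteq> ws ! 2" "ws ! (4 mod n) \<noteq> ws ! 2" "ws ! 1 \<noteq> ws ! (3 mod n)"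
    using dist mod n by auto
  show "ws ! 0 \<in> set ws" "ws ! (4 mod n) \<in> set ws"
    using mod n nth_mem[of 0 ws] nth_mem[of "4 mod n" ws] unfolding n_def by auto
qed

text \<open>The variable of largest rank on a cycle would reach both of its cycle checks from
  variables of no larger rank.\<close>

lemma not_is_cycle_if_ranked:
  fixes F :: "('a \<times> 'b) set" and rk :: "'a \<Rightarrow> nat" and parent :: "'a \<Rightarrow> 'b"
  assumes parent: "\<And>a a' c. (a, c) \<in> F \<Longrightarrow> (a', c) \<in> F \<Longrightarrow> a' \<noteq> a \<Longrightarrow> rk a' \<le> rk a
    \<Longrightarrow> c = parent a"
  shows "\<not> is_cycle (bip_adj F) vs"
proof
  assume cyc: "is_cycle (bip_adj F) vs"
  define A where "A = {a. Inl a \<in> set vs}"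
  have "bip_adj F (vs ! 0) (vs ! 1)" "vs ! 0 \<in> set vs" "vs ! 1 \<in> set vs"
    using is_cycle_window(1,8)[OF cyc] nth_mem[of 1 vs] cyc unfolding is_cycle_def by auto
  then have "A \<noteq> {}"
    unfolding A_def by (auto elim!: bip_adjE)
  moreover have "finite A"
    using finite_vimageI[of "set vs" Inl] unfolding A_def vimage_def by simp
  ultimately have "Max (rk ` A) \<in> rk ` A"
    by simp
  then obtain a where "a \<in> A" "rk a = Max (rk ` A)"
    by auto
  with \<open>finite A\<close> have max: "\<And>b. b \<in> A \<Longrightarrow> rk b \<le> rk a"
    by simp
  from \<open>a \<in> A\<close> have "Inl a \<in> set vs"
    unfolding A_def by simp
  then obtain ws where ws: "is_cycle (bip_adj F) ws" "set ws = set vs" "ws ! 2 = Inl a"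
    by (rule is_cycle_rotate_to[OF cyc])
  let ?n = "length ws"
  note window = is_cycle_window[OF ws(1)]
  obtain c1 c2 where c: "ws ! 1 = Inr c1" "(a, c1) \<in> F" "ws ! (3 mod ?n) = Inr c2" "(a, c2) \<in> F"
    using window(2,3) ws(3) by (auto elim!: bip_adjE)
  obtain u1 u2 where u: "ws ! 0 = Inl u1" "(u1, c1) \<in> F" "ws ! (4 mod ?n) = Inl u2" "(u2, c2) \<in> F"
    using window(1,4) c(1,3) by (auto elim!: bip_adjE)
  have "u1 \<noteq> a" "u2 \<noteq> a" "c1 \<noteq> c2"
    using window(5-7) ws(3) c u by auto
  moreover have "u1 \<in> A" "u2 \<in> A"
    using window(8,9) ws(2) u unfolding A_def by auto
  ultimately show False
    using parent[of a c1 u1] parent[of a c2 u2] max c u by auto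
qed

lemma card_edges_at_variables:
  assumes "E \<subseteq> {..<N} \<times> {..<M}"
  shows "card {e \<in> E. P (fst e)} = (\<Sum>v | v < N \<and> P v. vdeg E v)"
proof -
  have "{e \<in> E. P (fst e)} = (SIGMA v:{v. v < N \<and> P v}. {c. (v, c) \<in> E})"
    using assms by auto
  moreover have "finite {c. (v, c) \<in> E}" for v
    using assms by (auto intro: finite_subset[of _ "{..<M}"])
  ultimately show ?thesis
    unfolding vdeg_def by simp
qed

lemma card_edges_eq_sum_cdeg:
  assumes "E \<subseteq> {..<N} \<times> {..<M}"
  shows "card E = (\<Sum>c<M. cdeg E c)"
proof -
  have "prod.swap ` E = (SIGMA c:{..<M}. {v. (v, c) \<in> E})"
    using assms by force
  moreover have "finite {v. (v, c) \<in> E}" for c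
    using assms by (auto intro: finite_subset[of _ "{..<N}"])
  ultimately have "card (prod.swap ` E) = (\<Sum>c<M. cdeg E c)"
    unfolding cdeg_def by simp
  then show ?thesis
    by (simp add: card_image)
qed

lemma card_ldpc_graph:
  assumes "ldpc_graph N M dc lam E"
  shows "card E = M * dc"
  using assms card_edges_eq_sum_cdeg[of E N M]
  unfolding ldpc_graph_def factor_graph_def by simp

lemma ldpc_graph_lam:
  assumes "ldpc_graph N M dc lam E"
  shows "lam i = real (i * card {v. v < N \<and> vdeg E v = i}) / real (M * dc)"
proof -
  have "E \<subseteq> {..<N} \<times> {..<M}" and "lam i = edge_dist E i"
    using assms unfolding ldpc_graph_def factor_graph_def by auto
  moreover have "(\<Sum>v | v < N \<and> vdeg E v = i. vdeg E v) = (\<Sum>v | v < N \<and> vdeg E v = i. i)"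
    by (rule sum.cong) auto
  ultimately show ?thesis
    unfolding edge_dist_def card_ldpc_graph[OF assms]
    using card_edges_at_variables[of E N M "\<lambda>v. vdeg E v = i"] by simp
qed

lemma edge_dist_eq_if_vdeg_eq:
  assumes "E \<subseteq> {..<N} \<times> {..<M}" "E' \<subseteq> {..<N} \<times> {..<M'}"
    and vdeg: "\<And>v. v < N \<Longrightarrow> vdeg E' v = vdeg E v"
  shows "edge_dist E' = edge_dist E"
proof
  fix i
  have "card {e \<in> E'. P (vdeg E' (fst e))} = card {e \<in> E. P (vdeg E (fst e))}" for P
    using card_edges_at_variables[OF assms(1), of "\<lambda>v. P (vdeg E v)"]
      card_edges_at_variables[OF assms(2), of "\<lambda>v. P (vdeg E' v)"] vdeg
    by (auto intro!: sum.cong)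
  from this[of "\<lambda>_. True"] this[of "\<lambda>j. j = i"] show "edge_dist E' i = edge_dist E i"
    unfolding edge_dist_def by simp
qed

lemma sum_deg_2_3:
  fixes f :: "nat \<Rightarrow> nat"
  shows "(\<Sum>v | v < N \<and> f v \<in> {2, 3}. f v) = 2 * card {v. v < N \<and> f v = 2} + 3 * card {v. v < N \<and> f v = 3}"
proof -
  have "{v. v < N \<and> f v \<in> {2, 3}} = {v. v < N \<and> f v = 2} \<union> {v. v < N \<and> f v = 3}"
    by auto
  then have "(\<Sum>v | v < N \<and> f v \<in> {2, 3}. f v) =
      (\<Sum>v | v < N \<and> f v = 2. f v) + (\<Sum>v | v < N \<and> f v = 3. f v)"
    by (simp add: sum.union_disjoint disjoint_iff)
  also have "\<dots> = (\<Sum>v | v < N \<and> f v = 2. 2) + (\<Sum>v | v < N \<and> f v = 3. 3)"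
    by (intro arg_cong2[where f = "(+)"] sum.cong) auto
  finally show ?thesis by simp
qed

lemma card_deg_2_3:
  fixes f :: "nat \<Rightarrow> nat"
  shows "card {v. v < N \<and> f v \<in> {2, 3}} = card {v. v < N \<and> f v = 2} + card {v. v < N \<and> f v = 3}"
proof -
  have "{v. v < N \<and> f v \<in> {2, 3}} = {v. v < N \<and> f v = 2} \<union> {v. v < N \<and> f v = 3}"
    by auto
  then show ?thesis by (simp add: card_Un_disjoint disjoint_iff)
qed

section \<open>Filling checks cyclically\<close>

lemma inj_on_add_mod:
  fixes a l M :: nat
  assumes "l \<le> M"
  shows "inj_on (\<lambda>i. (a + i) mod M) {..<l}"
proof (rule inj_onI)
  have eq_if_le: "i = j" if le: "i \<le> j" and "j < l" and eq: "(a + i) mod M = (a + j) mod M"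
    for i j
  proof -
    obtain s where "a + j = a + i + M * s"
      by (rule mod_eq_nat2E[OF eq]) (use le in auto)
    moreover have "j - i < M" using \<open>j < l\<close> assms by linarith
    ultimately show ?thesis using le by (cases s) auto
  qed
  fix i j assume "i \<in> {..<l}" "j \<in> {..<l}" "(a + i) mod M = (a + j) mod M"
  then show "i = j"
    using eq_if_le[of i j] eq_if_le[of j i] by (cases "i \<le> j") auto
qed

definition block_start :: "nat list \<Rightarrow> nat \<Rightarrow> nat" where
  "block_start ds k = sum_list (take k ds)"

definition slots :: "nat list \<Rightarrow> (nat \<times> nat) set" where
  "slots ds = (SIGMA k:{..<length ds}. {..<ds ! k})"

lemma block_start_add_le:
  assumes "k < k'" "k' \<le> length ds"
  shows "block_start ds k + ds ! k \<le> block_start ds k'"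
proof -
  have "take k' ds = take (Suc k) ds @ take (k' - Suc k) (drop (Suc k) ds)"
    using assms(1) take_add[of "Suc k" "k' - Suc k" ds] by simp
  then have "sum_list (take (Suc k) ds) \<le> sum_list (take k' ds)"
    by simp
  then show ?thesis
    using assms unfolding block_start_def by (simp add: take_Suc_conv_app_nth)
qed

lemma slot_position_bij:
  "bij_betw (\<lambda>(k, i). block_start ds k + i) (slots ds) {..<sum_list ds}"
proof -
  let ?pos = "\<lambda>(k, i). block_start ds k + i"
  have inj: "inj_on ?pos (slots ds)"
  proof (rule inj_onI, clarify)
    fix k i k' i' assume "(k, i) \<in> slots ds" "(k', i') \<in> slots ds"
      and eq: "block_start ds k + i = block_start ds k' + i'"
    then have "i < ds ! k" "i' < ds ! k'" "k < length ds" "k' < length ds"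
      unfolding slots_def by auto
    moreover have "block_start ds k + ds ! k \<le> block_start ds k'" if "k < k'"
      using block_start_add_le that \<open>k' < length ds\<close> by simp
    moreover have "block_start ds k' + ds ! k' \<le> block_start ds k" if "k' < k"
      using block_start_add_le that \<open>k < length ds\<close> by simp
    ultimately have "k = k'"
      using eq by (metis add_less_cancel_left le_add1 linorder_neqE_nat not_le order.strict_trans2)
    then show "k = k' \<and> i = i'" using eq by simp
  qed
  have "?pos ` slots ds \<subseteq> {..<sum_list ds}"
  proof clarify
    fix k i assume "(k, i) \<in> slots ds"
    then have "block_start ds k + i < block_start ds k + ds ! k" "k < length ds"
      unfolding slots_def by auto
    moreover have "block_start ds k + ds ! k \<le> sum_list ds"
      using block_start_add_le[of k "length ds" ds] \<open>k < length ds\<close>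
      by (simp add: block_start_def)
    ultimately show "block_start ds k + i < sum_list ds" by linarith
  qed
  moreover have "card (slots ds) = sum_list ds"
    unfolding slots_def by (simp add: sum_list_sum_nth atLeast0LessThan)
  ultimately show ?thesis
    using inj by (simp add: bij_betw_def card_image card_subset_eq)
qed

definition cyclic_fill :: "nat \<Rightarrow> nat \<Rightarrow> ('a \<Rightarrow> nat) \<Rightarrow> 'a list \<Rightarrow> ('a \<times> nat) set" where
  "cyclic_fill M X d vs =
     (\<lambda>(k, i). (vs ! k, (X + (block_start (map d vs) k + i)) mod M)) ` slots (map d vs)"

lemma cyclic_fill_memD:
  assumes "(v, c) \<in> cyclic_fill M X d vs"
  shows "v \<in> set vs" "\<exists>t < sum_list (map d vs). c = (X + t) mod M"
proof -
  obtain k i where "(k, i) \<in> slots (map d vs)" "v = vs ! k"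
    "c = (X + (block_start (map d vs) k + i)) mod M"
    using assms unfolding cyclic_fill_def by auto
  moreover from this(1) have "block_start (map d vs) k + i < sum_list (map d vs)"
    using bij_betw_apply[OF slot_position_bij] by fastforce
  ultimately show "v \<in> set vs" "\<exists>t < sum_list (map d vs). c = (X + t) mod M"
    unfolding slots_def by auto
qed

lemma card_cyclic_fill_row:
  assumes "distinct vs" "v \<in> set vs" "d v \<le> M"
  shows "card {c. (v, c) \<in> cyclic_fill M X d vs} = d v"
proof -
  obtain k where k: "k < length vs" "vs ! k = v"
    using assms(2) by (metis in_set_conv_nth)
  have "{c. (v, c) \<in> cyclic_fill M X d vs} =
      (\<lambda>i. (X + block_start (map d vs) k + i) mod M) ` {..<d v}"
    using k nth_eq_iff_index_eq[OF assms(1)] unfolding cyclic_fill_def slots_def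
    by (force simp: add.assoc)
  then show ?thesis
    using inj_on_add_mod[OF assms(3)] by (simp add: card_image)
qed

lemma inj_on_cyclic_fill_edge:
  assumes "distinct vs" "\<And>v. v \<in> set vs \<Longrightarrow> d v \<le> M"
  shows "inj_on (\<lambda>(k, i). (vs ! k, (X + (block_start (map d vs) k + i)) mod M)) (slots (map d vs))"
proof (rule inj_onI, clarify)
  fix k i k' i' assume "(k, i) \<in> slots (map d vs)" "(k', i') \<in> slots (map d vs)"
    and eq: "vs ! k = vs ! k'"
      "(X + (block_start (map d vs) k + i)) mod M = (X + (block_start (map d vs) k' + i')) mod M"
  then have "k = k'" "i < d (vs ! k)" "i' < d (vs ! k)" "k < length vs"
    using nth_eq_iff_index_eq[OF assms(1)] unfolding slots_def by auto
  moreover have "d (vs ! k) \<le> M"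
    using assms(2) \<open>k < length vs\<close> by simp
  ultimately show "k = k' \<and> i = i'"
    using eq(2) inj_on_add_mod[of "d (vs ! k)" M "X + block_start (map d vs) k"]
    by (auto simp: inj_on_def add.assoc)
qed

lemma card_cyclic_fill_col:
  assumes "distinct vs" "\<And>v. v \<in> set vs \<Longrightarrow> d v \<le> M"
  shows "card {v. (v, c) \<in> cyclic_fill M X d vs} =
    card {t. t < sum_list (map d vs) \<and> (X + t) mod M = c}"
proof -
  let ?ds = "map d vs"
  let ?pos = "\<lambda>(k, i). block_start ?ds k + i"
  let ?edge = "\<lambda>(k, i). (vs ! k, (X + (block_start ?ds k + i)) mod M)"
  let ?S = "{s \<in> slots ?ds. (X + ?pos s) mod M = c}"
  have "card {v. (v, c) \<in> cyclic_fill M X d vs} = card {e \<in> cyclic_fill M X d vs. snd e = c}"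
    by (rule bij_betw_same_card[of fst, symmetric]) (auto simp: bij_betw_def inj_on_def image_iff)
  also have "{e \<in> cyclic_fill M X d vs. snd e = c} = ?edge ` ?S"
    unfolding cyclic_fill_def by auto
  also have "card (?edge ` ?S) = card ?S"
    by (intro card_image inj_on_subset[OF inj_on_cyclic_fill_edge[OF assms]]) auto
  also have "\<dots> = card (?pos ` ?S)"
    by (intro card_image[symmetric] inj_on_subset[OF bij_betw_imp_inj_on[OF slot_position_bij]]) auto
  also have "?pos ` ?S = {t \<in> ?pos ` slots ?ds. (X + t) mod M = c}"
    by blast
  also have "\<dots> = {t. t < sum_list ?ds \<and> (X + t) mod M = c}"
    using bij_betw_imp_surj_on[OF slot_position_bij, of ?ds] by auto
  finally show ?thesis .
qed

lemma card_residue_below: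
  fixes b c M :: nat
  assumes "c < M"
  shows "card {u. u < b \<and> u mod M = c} = b div M + (if c < b mod M then 1 else 0)"
proof (induction b)
  case (Suc b)
  have "{u. u < Suc b \<and> u mod M = c} = {u. u < b \<and> u mod M = c} \<union> (if b mod M = c then {b} else {})"
    by (auto simp: less_Suc_eq)
  then have step: "card {u. u < Suc b \<and> u mod M = c} =
      card {u. u < b \<and> u mod M = c} + (if b mod M = c then 1 else 0)"
    by (simp add: card_insert_if)
  moreover have "0 < M" using assms by simp
  ultimately show ?case
  proof (cases "Suc (b mod M) = M")
    case True
    then have "Suc b mod M = 0" "Suc b div M = Suc (b div M)"
      using \<open>0 < M\<close> by (auto simp: mod_Suc div_Suc)
    then show ?thesis using step Suc.IH True assms by auto
  next
    case False
    then have "Suc b mod M = Suc (b mod M)" "Suc b div M = b div M"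
      using \<open>0 < M\<close> by (auto simp: mod_Suc div_Suc)
    then show ?thesis using step Suc.IH False assms by auto
  qed
qed simp

lemma card_residue_shift:
  fixes a b c M :: nat
  shows "card {u. u < a \<and> u mod M = c} + card {t. t < b \<and> (a + t) mod M = c} =
    card {u. u < a + b \<and> u mod M = c}"
proof -
  have "{u. u < a + b \<and> u mod M = c} =
      {u. u < a \<and> u mod M = c} \<union> (+) a ` {t. t < b \<and> (a + t) mod M = c}"
  proof (intro set_eqI iffI)
    fix u assume u: "u \<in> {u. u < a + b \<and> u mod M = c}"
    show "u \<in> {u. u < a \<and> u mod M = c} \<union> (+) a ` {t. t < b \<and> (a + t) mod M = c}"
    proof (cases "u < a")
      case False
      then have "u = a + (u - a)" "u - a < b" using u by auto
      then show ?thesis using u by (metis (mono_tags, lifting) Un_iff image_eqI mem_Collect_eq)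
    qed (use u in simp)
  qed auto
  moreover have "card ((+) a ` {t. t < b \<and> (a + t) mod M = c}) = card {t. t < b \<and> (a + t) mod M = c}"
    by (simp add: card_image)
  moreover have "{u. u < a \<and> u mod M = c} \<inter> (+) a ` {t. t < b \<and> (a + t) mod M = c} = {}"
    by auto
  ultimately show ?thesis
    using card_Un_disjoint[of "{u. u < a \<and> u mod M = c}" "(+) a ` {t. t < b \<and> (a + t) mod M = c}"]
    by simp
qed

section \<open>A cycle-free factor graph with prescribed degrees\<close>

context
  fixes N M dc :: nat and d :: "nat \<Rightarrow> nat"
  assumes M_pos: "0 < M"
    and d_le_M: "\<And>v. v < N \<Longrightarrow> d v \<le> M"
    and sum_d: "(\<Sum>v<N. d v) = M * dc"
    and few_deg23: "card {v. v < N \<and> d v = 2} + 2 * card {v. v < N \<and> d v = 3} + 1 \<le> M"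
begin

definition vars23 :: "nat list" where
  "vars23 = sorted_list_of_set {v. v < N \<and> d v \<in> {2, 3}}"

definition vars_rest :: "nat list" where
  "vars_rest = sorted_list_of_set {v. v < N \<and> d v \<notin> {2, 3}}"

lemma distinct_vars23: "distinct vars23" and set_vars23: "set vars23 = {v. v < N \<and> d v \<in> {2, 3}}"
  and distinct_vars_rest: "distinct vars_rest" and set_vars_rest: "set vars_rest = {v. v < N \<and> d v \<notin> {2, 3}}"
  unfolding vars23_def vars_rest_def by auto

lemma sum_vars23: "sum_list (map d vars23) = 2 * card {v. v < N \<and> d v = 2} + 3 * card {v. v < N \<and> d v = 3}"
  and length_vars23: "length vars23 = card {v. v < N \<and> d v = 2} + card {v. v < N \<and> d v = 3}"
  using sum_deg_2_3[where f = d and N = N] card_deg_2_3[where f = d and N = N] distinct_vars23 set_vars23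
  by (simp add: sum_list_distinct_conv_sum_set, metis distinct_card)

text \<open>The first shared + 1 variables of vars23 form a path through the checks single, ...,
  single + shared - 1, each shared by two consecutive ones; all other edges of vars23 go to
  the distinct checks 0, ..., single - 1, and vars_rest fills the slots cyclically from
  check single + shared on.\<close>

definition shared :: nat where
  "shared = sum_list (map d vars23) - M"

definition single :: nat where
  "single = sum_list (map d vars23) - 2 * shared"

lemma shared_lt_length_vars23: "shared = 0 \<or> shared < length vars23"
  and single_shared_le_M: "single + shared \<le> M"
  and single_shared_eq_M: "0 < shared \<Longrightarrow> single + shared = M"
  and sum_vars23_eq: "sum_list (map d vars23) = single + 2 * shared"
  using sum_vars23 length_vars23 few_deg23 unfolding shared_def single_def by linarith+

definition rank :: "nat \<Rightarrow> nat" where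
  "rank = the_inv_into {..<length vars23} ((!) vars23)"

lemma rank_nth: "k < length vars23 \<Longrightarrow> rank (vars23 ! k) = k"
  unfolding rank_def using distinct_vars23
  by (intro the_inv_into_f_f) (auto simp: inj_on_def nth_eq_iff_index_eq)

definition chain_deg :: "nat \<Rightarrow> nat" where
  "chain_deg k = (if k < shared then 1 else 0) + (if 1 \<le> k \<and> k \<le> shared then 1 else 0)"

definition private_deg :: "nat \<Rightarrow> nat" where
  "private_deg v = d v - chain_deg (rank v)"

definition chain :: "(nat \<times> nat) set" where
  "chain = (\<lambda>k. (vars23 ! k, single + k)) ` {..<shared} \<union> (\<lambda>k. (vars23 ! Suc k, single + k)) ` {..<shared}"

definition tree_graph :: "(nat \<times> nat) set" where
  "tree_graph = cyclic_fill M 0 private_deg vars23 \<union> chain \<union> cyclic_fill M (single + shared) d vars_rest"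

lemma sum_chain_deg: "(\<Sum>k<length vars23. chain_deg k) = 2 * shared"
proof -
  have "(\<Sum>k<length vars23. chain_deg k) = card {k \<in> {..<length vars23}. k < shared}
      + card {k \<in> {..<length vars23}. 1 \<le> k \<and> k \<le> shared}"
    unfolding chain_deg_def sum.distrib by (simp add: sum.inter_filter[symmetric])
  moreover have "{k \<in> {..<length vars23}. k < shared} = {..<shared}"
    "{k \<in> {..<length vars23}. 1 \<le> k \<and> k \<le> shared} = {1..shared}"
    using shared_lt_length_vars23 by auto
  ultimately show ?thesis by simp
qed

lemma private_deg_add_chain_deg:
  assumes "k < length vars23"
  shows "private_deg (vars23 ! k) + chain_deg k = d (vars23 ! k)"
proof -
  have "d (vars23 ! k) \<in> {2, 3}" using nth_mem[OF assms] set_vars23 by auto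
  moreover have "chain_deg k \<le> 2" unfolding chain_deg_def by simp
  ultimately show ?thesis
    unfolding private_deg_def rank_nth[OF assms] by auto
qed

lemma sum_private_deg: "sum_list (map private_deg vars23) = single"
proof -
  have "sum_list (map d vars23) = (\<Sum>k<length vars23. private_deg (vars23 ! k) + chain_deg k)"
    using private_deg_add_chain_deg by (simp add: sum_list_sum_nth atLeast0LessThan)
  also have "\<dots> = sum_list (map private_deg vars23) + 2 * shared"
    using sum_chain_deg by (simp add: sum.distrib sum_list_sum_nth atLeast0LessThan)
  finally show ?thesis using sum_vars23_eq by simp
qed

lemma nth_vars23_eq_iff:
  assumes "j \<le> shared" "k < length vars23"
  shows "vars23 ! k = vars23 ! j \<longleftrightarrow> j = k"
proof -
  have "j < length vars23" using assms shared_lt_length_vars23 by auto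
  then show ?thesis using nth_eq_iff_index_eq[OF distinct_vars23] assms(2) by auto
qed

lemma chain_subset: "chain \<subseteq> set vars23 \<times> {single..<single + shared}"
  using shared_lt_length_vars23 unfolding chain_def by (auto intro!: nth_mem)

lemma mem_chain_iff:
  assumes "k < length vars23"
  shows "(vars23 ! k, c) \<in> chain \<longleftrightarrow>
    k < shared \<and> c = single + k \<or> 1 \<le> k \<and> k \<le> shared \<and> c = single + k - 1"
proof
  assume "(vars23 ! k, c) \<in> chain"
  then obtain j where "j < shared"
    "vars23 ! k = vars23 ! j \<and> c = single + j \<or> vars23 ! k = vars23 ! Suc j \<and> c = single + j"
    unfolding chain_def by auto
  then show "k < shared \<and> c = single + k \<or> 1 \<le> k \<and> k \<le> shared \<and> c = single + k - 1"
    using nth_vars23_eq_iff[OF _ assms, of j] nth_vars23_eq_iff[OF _ assms, of "Suc j"] by auto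
next
  assume "k < shared \<and> c = single + k \<or> 1 \<le> k \<and> k \<le> shared \<and> c = single + k - 1"
  then show "(vars23 ! k, c) \<in> chain"
    unfolding chain_def by (auto simp: image_iff intro: bexI[of _ "k - 1"])
qed

lemma card_chain_row:
  assumes "k < length vars23"
  shows "card {c. (vars23 ! k, c) \<in> chain} = chain_deg k"
proof -
  have "{c. (vars23 ! k, c) \<in> chain} =
      (if k < shared then {single + k} else {}) \<union> (if 1 \<le> k \<and> k \<le> shared then {single + k - 1} else {})"
    using mem_chain_iff[OF assms] by auto
  then show ?thesis unfolding chain_deg_def by auto
qed

lemma card_chain_col:
  "card {v. (v, c) \<in> chain} = (if single \<le> c \<and> c < single + shared then 2 else 0)"
proof -
  have "{v. (v, c) \<in> chain} =
      (if single \<le> c \<and> c < single + shared then {vars23 ! (c - single), vars23 ! Suc (c - single)} else {})"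
    unfolding chain_def by (auto simp: image_iff)
  moreover have "vars23 ! (c - single) \<noteq> vars23 ! Suc (c - single)" if "single \<le> c" "c < single + shared"
    using that shared_lt_length_vars23 nth_vars23_eq_iff[of "c - single" "Suc (c - single)"] by fastforce
  ultimately show ?thesis by auto
qed

lemma sum_vars23_add_sum_vars_rest: "sum_list (map d vars23) + sum_list (map d vars_rest) = M * dc"
proof -
  have "{..<N} = set vars23 \<union> set vars_rest" "set vars23 \<inter> set vars_rest = {}"
    unfolding set_vars23 set_vars_rest by auto
  then show ?thesis
    using sum_d distinct_vars23 distinct_vars_rest
    by (simp add: sum_list_distinct_conv_sum_set sum.union_disjoint[symmetric])
qed

lemma private_deg_le_M: "v \<in> set vars23 \<Longrightarrow> private_deg v \<le> M"
  using d_le_M set_vars23 unfolding private_deg_def by fastforce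

lemma mem_private_fillD:
  assumes "(v, c) \<in> cyclic_fill M 0 private_deg vars23"
  shows "v \<in> set vars23" "c < single"
proof -
  obtain t where "t < single" "c = t mod M"
    using cyclic_fill_memD(2)[OF assms] sum_private_deg by auto
  then show "c < single"
    using single_shared_le_M by simp
qed (rule cyclic_fill_memD(1)[OF assms])

lemma card_private_fill_col:
  "card {v. (v, c) \<in> cyclic_fill M 0 private_deg vars23} = (if c < single then 1 else 0)"
proof -
  have "{t. t < single \<and> t mod M = c} = (if c < single then {c} else {})"
    using single_shared_le_M by auto
  then show ?thesis
    using card_cyclic_fill_col[OF distinct_vars23 private_deg_le_M, where X = 0] sum_private_deg by simp
qed

lemma card_rest_fill_col:
  assumes "c < M"
  shows "card {v. (v, c) \<in> cyclic_fill M (single + shared) d vars_rest}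
    + (if c < single then 1 else 0) + (if single \<le> c \<and> c < single + shared then 2 else 0) = dc"
proof -
  let ?R = "sum_list (map d vars_rest)"
  have col: "card {v. (v, c) \<in> cyclic_fill M (single + shared) d vars_rest}
      = card {t. t < ?R \<and> (single + shared + t) mod M = c}"
    using d_le_M set_vars_rest by (intro card_cyclic_fill_col distinct_vars_rest) auto
  have front: "card {u. u < single + shared \<and> u mod M = c} = (if c < single + shared then 1 else 0)"
    using card_residue_below[OF assms, of "single + shared"] single_shared_le_M assms
    by (cases "single + shared = M") auto
  have total: "single + shared + ?R + shared = M * dc"
    using sum_vars23_add_sum_vars_rest sum_vars23_eq by simp
  show ?thesis
  proof (cases "shared = 0")
    case True
    then have "card {u. u < single + shared + ?R \<and> u mod M = c} = dc"
      using card_residue_below[OF assms, of "M * dc"] total M_pos by simp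
    then show ?thesis
      using card_residue_shift[of "single + shared" M c ?R] col front True by simp
  next
    case False
    then have "single + shared = M" "single < M" using single_shared_eq_M by auto
    then have split: "single + shared + ?R = single + M * (dc - 1)"
      using total by (cases dc) (auto simp: algebra_simps)
    have "card {u. u < single + shared + ?R \<and> u mod M = c} = dc - 1 + (if c < single then 1 else 0)"
      unfolding split using card_residue_below[OF assms, of "single + M * (dc - 1)"] \<open>single < M\<close>
      by simp
    moreover have "M * 1 < M * dc"
      using total \<open>single + shared = M\<close> False by linarith
    then have "dc \<ge> 2"
      by simp
    ultimately show ?thesis
      using card_residue_shift[of "single + shared" M c ?R] col front \<open>single + shared = M\<close> assms by auto
  qed
qed

lemma mem_rest_fillD:
  "(v, c) \<in> cyclic_fill M (single + shared) d vars_rest \<Longrightarrow> v \<in> set vars_rest \<and> c < M"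
  using cyclic_fill_memD(1) cyclic_fill_memD(2) M_pos by fastforce

lemma tree_graph_subset: "tree_graph \<subseteq> {..<N} \<times> {..<M}"
  using mem_private_fillD chain_subset mem_rest_fillD single_shared_le_M set_vars23 set_vars_rest
  unfolding tree_graph_def by fastforce

lemma vdeg_tree_graph:
  assumes "v < N"
  shows "vdeg tree_graph v = d v"
proof (cases "v \<in> set vars23")
  case True
  then obtain k where k: "k < length vars23" "v = vars23 ! k" by (metis in_set_conv_nth)
  have "v \<notin> set vars_rest" using True set_vars23 set_vars_rest by auto
  then have "{c. (v, c) \<in> tree_graph} =
      {c. (v, c) \<in> cyclic_fill M 0 private_deg vars23} \<union> {c. (v, c) \<in> chain}"
    unfolding tree_graph_def using mem_rest_fillD by auto
  moreover have "{c. (v, c) \<in> cyclic_fill M 0 private_deg vars23} \<inter> {c. (v, c) \<in> chain} = {}"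
    using mem_private_fillD chain_subset by fastforce
  moreover have "finite {c. (v, c) \<in> chain}"
    using chain_subset by (auto intro: finite_subset[of _ "{single..<single + shared}"])
  moreover have "finite {c. (v, c) \<in> cyclic_fill M 0 private_deg vars23}"
    using mem_private_fillD by (auto intro: finite_subset[of _ "{..<single}"])
  ultimately have "vdeg tree_graph v = private_deg v + chain_deg k"
    unfolding vdeg_def using card_cyclic_fill_row[OF distinct_vars23 True, where d = private_deg] private_deg_le_M[OF True]
      card_chain_row[OF k(1)] k(2) by (simp add: card_Un_disjoint)
  then show ?thesis
    using private_deg_add_chain_deg[OF k(1)] k(2) by simp
next
  case False
  then have "v \<in> set vars_rest" using assms set_vars23 set_vars_rest by auto
  moreover from False have "{c. (v, c) \<in> tree_graph} = {c. (v, c) \<in> cyclic_fill M (single + shared) d vars_rest}"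
    unfolding tree_graph_def using mem_private_fillD chain_subset by auto
  ultimately show ?thesis
    unfolding vdeg_def using card_cyclic_fill_row[OF distinct_vars_rest] d_le_M assms by simp
qed

lemma cdeg_tree_graph:
  assumes "c < M"
  shows "cdeg tree_graph c = dc"
proof -
  let ?P = "{v. (v, c) \<in> cyclic_fill M 0 private_deg vars23}" and ?C = "{v. (v, c) \<in> chain}"
    and ?H = "{v. (v, c) \<in> cyclic_fill M (single + shared) d vars_rest}"
  have sub: "?P \<subseteq> set vars23" "?C \<subseteq> set vars23" "?H \<subseteq> set vars_rest"
    using mem_private_fillD chain_subset mem_rest_fillD by auto
  then have fin: "finite ?P" "finite ?C" "finite ?H"
    by (auto intro: finite_subset)
  have "?P \<inter> ?C = {}"
    using mem_private_fillD chain_subset by fastforce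
  then have "card (?P \<union> ?C) = card ?P + card ?C"
    using fin by (simp add: card_Un_disjoint)
  moreover have "(?P \<union> ?C) \<inter> ?H = {}"
    using sub set_vars23 set_vars_rest by auto
  ultimately have "card (?P \<union> ?C \<union> ?H) = card ?P + card ?C + card ?H"
    using fin by (simp add: card_Un_disjoint)
  moreover have "{v. (v, c) \<in> tree_graph} = ?P \<union> ?C \<union> ?H"
    unfolding tree_graph_def by auto
  ultimately have "cdeg tree_graph c = card ?P + card ?C + card ?H"
    unfolding cdeg_def by simp
  then show ?thesis
    using card_private_fill_col card_chain_col card_rest_fill_col[OF assms] by simp
qed

lemma tree_graph_edge23D:
  assumes "(a, c) \<in> tree_graph" "vdeg tree_graph a \<in> {2, 3}"
  shows "a \<in> set vars23"
    and "(a, c) \<in> cyclic_fill M 0 private_deg vars23 \<and> c < single \<or> (a, c) \<in> chain \<and> single \<le> c"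
proof -
  have "a < N"
    using assms(1) tree_graph_subset by auto
  then show "a \<in> set vars23"
    using assms(2) vdeg_tree_graph set_vars23 by simp
  then have "a \<notin> set vars_rest"
    using set_vars23 set_vars_rest by auto
  then have "(a, c) \<in> cyclic_fill M 0 private_deg vars23 \<or> (a, c) \<in> chain"
    using assms(1) mem_rest_fillD unfolding tree_graph_def by blast
  then show "(a, c) \<in> cyclic_fill M 0 private_deg vars23 \<and> c < single \<or> (a, c) \<in> chain \<and> single \<le> c"
    by (auto dest: mem_private_fillD(2) subsetD[OF chain_subset])
qed

lemma mem_private_fill_unique:
  assumes "(a, c) \<in> cyclic_fill M 0 private_deg vars23" "(a', c) \<in> cyclic_fill M 0 private_deg vars23"
  shows "a' = a"
proof -
  have "finite {v. (v, c) \<in> cyclic_fill M 0 private_deg vars23}"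
    using mem_private_fillD by (auto intro: finite_subset[of _ "set vars23"])
  then have "card {a, a'} \<le> card {v. (v, c) \<in> cyclic_fill M 0 private_deg vars23}"
    using assms by (intro card_mono) auto
  then have "card {a, a'} \<le> 1"
    using card_private_fill_col[of c] by (simp split: if_splits)
  then show ?thesis
    by (cases "a' = a") auto
qed

text \<open>Ordered by rank, each degree-2/3 variable shares with its predecessors only the chain
  check to its left.\<close>

lemma tree_graph_shared_check:
  assumes "(a, c) \<in> tree_graph" "vdeg tree_graph a \<in> {2, 3}"
    and "(a', c) \<in> tree_graph" "vdeg tree_graph a' \<in> {2, 3}"
    and "a' \<noteq> a" "rank a' \<le> rank a"
  shows "c = single + rank a - 1"
proof -
  note a = tree_graph_edge23D[OF assms(1,2)] and a' = tree_graph_edge23D[OF assms(3,4)]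
  obtain k k' where k: "k < length vars23" "a = vars23 ! k" and k': "k' < length vars23" "a' = vars23 ! k'"
    using a(1) a'(1) by (metis in_set_conv_nth)
  then have "rank a = k" "rank a' = k'"
    by (simp_all add: rank_nth)
  then have "k' < k"
    using assms(5,6) k k' by (cases "k = k'") auto
  moreover have "(a, c) \<in> chain" "(a', c) \<in> chain"
    using a(2) a'(2) mem_private_fill_unique assms(5) by auto
  ultimately show ?thesis
    using mem_chain_iff[OF k(1)] mem_chain_iff[OF k'(1)] k k' \<open>rank a = k\<close> by auto
qed

lemma tree_graph_no_cycle23: "\<not> has_cycle23 tree_graph"
proof -
  let ?F = "{e \<in> tree_graph. vdeg tree_graph (fst e) \<in> {2, 3}}"
  have "\<not> is_cycle (bip_adj ?F) vs" for vs
    by (rule not_is_cycle_if_ranked[where rk = rank]) (auto intro: tree_graph_shared_check)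
  then show ?thesis
    unfolding has_cycle23_iff by blast
qed

lemma exists_tree_graph:
  "\<exists>E. E \<subseteq> {..<N} \<times> {..<M} \<and> (\<forall>v<N. vdeg E v = d v) \<and> (\<forall>c<M. cdeg E c = dc)
     \<and> \<not> has_cycle23 E"
  using tree_graph_subset vdeg_tree_graph cdeg_tree_graph tree_graph_no_cycle23 by blast

end

section \<open>The realizability criterion\<close>

lemma ldpc_graph_pos:
  assumes "ldpc_graph N M dc lam E"
  shows "0 < N" "0 < M" "0 < dc"
proof -
  have "E \<subseteq> {..<N} \<times> {..<M}" "E \<noteq> {}"
    using assms unfolding ldpc_graph_def factor_graph_def by auto
  then have "finite E" "0 < card E" "{..<N} \<times> {..<M} \<noteq> {}"
    by (auto intro: finite_subset simp: card_gt_0_iff)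
  then show "0 < N" "0 < M" "0 < dc"
    using card_ldpc_graph[OF assms] by auto
qed

lemma card_deg_2_3_eq:
  assumes "ldpc_graph N M dc lam E" "ldpc_graph N M dc lam E'" "i \<in> {2, 3}"
  shows "card {v. v < N \<and> vdeg E' v = i} = card {v. v < N \<and> vdeg E v = i}"
  using ldpc_graph_lam[OF assms(1), of i] ldpc_graph_lam[OF assms(2), of i]
    ldpc_graph_pos[OF assms(1)] assms(3) by (auto simp: divide_cancel_right)

lemma acyclic_deg_2_3_bound:
  assumes "E \<subseteq> {..<N} \<times> {..<M}" "0 < M" "\<not> has_cycle23 E"
  shows "card {v. v < N \<and> vdeg E v = 2} + 2 * card {v. v < N \<and> vdeg E v = 3} + 1 \<le> M"
proof -
  let ?A = "{v. v < N \<and> vdeg E v \<in> {2, 3}}"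
  let ?F = "{e \<in> E. vdeg E (fst e) \<in> {2, 3}}"
  have "card ?F < card (Inl ` ?A \<union> Inr ` {..<M})"
  proof (rule card_edges_less_if_acyclic)
    show "Inl a \<in> Inl ` ?A \<union> Inr ` {..<M} \<and> Inr c \<in> Inl ` ?A \<union> Inr ` {..<M}"
      if "(a, c) \<in> ?F" for a c
      using that assms(1) by auto
    show "\<nexists>vs. is_cycle (bip_adj ?F) vs"
      using assms(3) unfolding has_cycle23_iff .
  qed (use assms(2) in auto)
  moreover have "card (Inl ` ?A \<union> Inr ` {..<M}) = card ?A + M"
    by (subst card_Un_disjoint) (auto simp: card_image)
  moreover have "card ?F = (\<Sum>v\<in>?A. vdeg E v)"
    using card_edges_at_variables[OF assms(1)] by simp
  ultimately show ?thesis
    using sum_deg_2_3[where f = "vdeg E" and N = N] card_deg_2_3[where f = "vdeg E" and N = N] by simp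
qed

lemma acyclic_realization_iff:
  assumes G0: "ldpc_graph N M dc lam E0"
  shows "(\<exists>E. ldpc_graph N M dc lam E \<and> \<not> has_cycle23 E) \<longleftrightarrow>
    card {v. v < N \<and> vdeg E0 v = 2} + 2 * card {v. v < N \<and> vdeg E0 v = 3} + 1 \<le> M"
proof
  assume "\<exists>E. ldpc_graph N M dc lam E \<and> \<not> has_cycle23 E"
  then obtain E where G: "ldpc_graph N M dc lam E" and acyclic: "\<not> has_cycle23 E" by blast
  have sub: "E \<subseteq> {..<N} \<times> {..<M}"
    using G unfolding ldpc_graph_def factor_graph_def by simp
  show "card {v. v < N \<and> vdeg E0 v = 2} + 2 * card {v. v < N \<and> vdeg E0 v = 3} + 1 \<le> M"
    using acyclic_deg_2_3_bound[OF sub ldpc_graph_pos(2)[OF G0] acyclic]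
      card_deg_2_3_eq[OF G0 G, of 2] card_deg_2_3_eq[OF G0 G, of 3] by simp
next
  assume bound: "card {v. v < N \<and> vdeg E0 v = 2} + 2 * card {v. v < N \<and> vdeg E0 v = 3} + 1 \<le> M"
  have sub0: "E0 \<subseteq> {..<N} \<times> {..<M}"
    using G0 unfolding ldpc_graph_def factor_graph_def by simp
  have le: "vdeg E0 v \<le> M" if "v < N" for v
  proof -
    have "{c. (v, c) \<in> E0} \<subseteq> {..<M}" using sub0 by auto
    then show ?thesis unfolding vdeg_def using card_mono[OF finite_lessThan] by fastforce
  qed
  have sum: "(\<Sum>v<N. vdeg E0 v) = M * dc"
    using card_edges_at_variables[OF sub0, of "\<lambda>_. True"] card_ldpc_graph[OF G0]
    by (simp add: lessThan_def)
  obtain E where E: "E \<subseteq> {..<N} \<times> {..<M}" "\<forall>v<N. vdeg E v = vdeg E0 v"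
    "\<forall>c<M. cdeg E c = dc" "\<not> has_cycle23 E"
    using exists_tree_graph[OF ldpc_graph_pos(2)[OF G0] le sum bound] by blast
  have "card E = M * dc"
    using card_edges_eq_sum_cdeg[OF E(1)] E(3) by simp
  then have "E \<noteq> {}"
    using ldpc_graph_pos[OF G0] by auto
  moreover have "edge_dist E = edge_dist E0"
    using edge_dist_eq_if_vdeg_eq[OF sub0 E(1)] E(2) by simp
  ultimately have "ldpc_graph N M dc lam E"
    using G0 E(1,3) unfolding ldpc_graph_def factor_graph_def by simp
  then show "\<exists>E. ldpc_graph N M dc lam E \<and> \<not> has_cycle23 E"
    using E(4) by blast
qed

lemma lam_bound_iff:
  fixes a b M dc :: nat
  assumes "0 < M" "0 < dc"
  shows "3 * (real (2 * a) / real (M * dc)) + 4 * (real (3 * b) / real (M * dc))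
      \<le> 6 / real dc * ((real M - 1) / real M) \<longleftrightarrow> a + 2 * b + 1 \<le> M"
proof -
  have "3 * (real (2 * a) / real (M * dc)) + 4 * (real (3 * b) / real (M * dc))
      = 6 / real dc * (real (a + 2 * b) / real M)"
    using assms by (simp add: field_simps)
  moreover have "6 / real dc * (real (a + 2 * b) / real M) \<le> 6 / real dc * ((real M - 1) / real M)
      \<longleftrightarrow> real (a + 2 * b) / real M \<le> (real M - 1) / real M"
    using assms by (intro mult_le_cancel_left_pos) simp
  moreover have "real (a + 2 * b) / real M \<le> (real M - 1) / real M \<longleftrightarrow> a + 2 * b + 1 \<le> M"
    using assms by (simp add: divide_le_cancel) linarith
  ultimately show ?thesis by simp
qed

theorem theorem4:
  fixes N M dc :: nat and lam :: "nat \<Rightarrow> real" and R :: real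
  assumes realizable: "\<exists>E. ldpc_graph N M dc lam E"
    and rate: "R = design_rate dc lam"
    and rate': "R = 1 - real M / real N"
  shows "((\<exists>E. ldpc_graph N M dc lam E \<and> \<not> has_cycle23 E) \<longleftrightarrow>
           3 * lam 2 + 4 * lam 3 \<le> 6 / real dc * (((1 - R) - 1 / real N) / (1 - R)))
         \<and> 6 / real dc * (((1 - R) - 1 / real N) / (1 - R)) < 6 / real dc"
proof -
  obtain E0 where G0: "ldpc_graph N M dc lam E0" using realizable by blast
  note pos = ldpc_graph_pos[OF G0]
  have rhs: "((1 - R) - 1 / real N) / (1 - R) = (real M - 1) / real M"
    using pos unfolding rate' by (simp add: field_simps)
  have "(\<exists>E. ldpc_graph N M dc lam E \<and> \<not> has_cycle23 E) \<longleftrightarrow>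
      3 * lam 2 + 4 * lam 3 \<le> 6 / real dc * ((real M - 1) / real M)"
    unfolding acyclic_realization_iff[OF G0] ldpc_graph_lam[OF G0, of 2] ldpc_graph_lam[OF G0, of 3]
    using lam_bound_iff[OF pos(2,3)] by simp
  moreover have "6 / real dc * ((real M - 1) / real M) < 6 / real dc"
    using pos mult_strict_left_mono[of "(real M - 1) / real M" 1 "6 / real dc"] by simp
  ultimately show ?thesis
    unfolding rhs by (simp only:)
qed

end
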